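(* The language $L_2=\{\,a^{2^n} b^{n} c^{2^n+n} \mid n \ge 1\,\}$ belongs to $\mathscr{L}_{rt}(\mathrm{MC\text{-}OCA}(1))$.
   Context: A cellular automaton (CA) is a system $\langle S,F,A,B,\#,b_l,b_r,\delta\rangle$ with finite nonempty state set $S$, accepting states $F\subseteq S$, nonempty input alphabet $A\subseteq S$, set $B$ of communication symbols, boundary symbol $\#\notin B$, communication functions $b_l,b_r:S\to B\cup\{\bot\}$ ($\bot$ means nothing is sent), and local transition function $\delta:(B\cup\{\#,\bot\})\times S\times(B\cup\{\#,\bot\})\to S$. On input $w=a_1\cdots a_n$ the cells $1,\dots,n$ start in $c_0(i)=a_i$ and update synchronously by $c_{t+1}(i)=\delta(b_r(c_t(i-1)),c_t(i),b_l(c_t(i+1)))$; the outer cells receive $\#$ on their free side at the first step and $\bot$ afterwards. Acceptance: the leftmost cell enters an accepting state at some time. Time complexity $t$: every accepted $w$ is accepted within $t(|w|)$ steps; real time: $t(n)=n$. A one-way CA (OCA) has $b_r\equiv\bot$ and the leftmost cell gets no boundary symbol. $\mathrm{com}(i,t)$ is the number of steps $j<t$ with $b_r(c_j(i))\ne\bot$ or $b_l(c_j(i+1))\ne\bot$; $\mathrm{mcom}(w)=\max_i \mathrm{com}(i,t(|w|))$. $\mathrm{MC\text{-}OCA}(f)$ denotes OCAs such that every accepted $w$ is accepted with $\mathrm{mcom}(w)\le g(|w|)$ for some $g\in O(f)$; $\mathscr{L}_{rt}(X)$ is the family of languages accepted by real-time devices of type $X$. *)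

theory Defs
  imports Main "HOL-Library.Landau_Symbols"
begin

text \<open>Values a cell can receive from a neighbour: the boundary symbol #,
  nothing (bottom), or a communication symbol.\<close>
datatype 'b rcv = Bnd | Bot | Msg 'b

text \<open>A cellular automaton <S,F,A,B,#,b_l,b_r,delta>; the communication
  functions return None for bottom (nothing sent).\<close>
record ('s, 'b) ca =
  St  :: "'s set"
  Acc :: "'s set"
  Inp :: "'s set"
  Com :: "'b set"
  bl  :: "'s \<Rightarrow> 'b option"
  br  :: "'s \<Rightarrow> 'b option"
  dlt :: "'b rcv \<Rightarrow> 's \<Rightarrow> 'b rcv \<Rightarrow> 's"

definition adm :: "'b set \<Rightarrow> 'b rcv \<Rightarrow> bool" where
  "adm B x \<longleftrightarrow> (\<forall>m. x = Msg m \<longrightarrow> m \<in> B)"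

definition wf_ca :: "('s, 'b) ca \<Rightarrow> bool" where
  "wf_ca M \<longleftrightarrow> finite (St M) \<and> St M \<noteq> {} \<and> Acc M \<subseteq> St M \<and>
     Inp M \<subseteq> St M \<and> Inp M \<noteq> {} \<and>
     (\<forall>s \<in> St M. set_option (bl M s) \<subseteq> Com M \<and> set_option (br M s) \<subseteq> Com M) \<and>
     (\<forall>x s y. adm (Com M) x \<longrightarrow> s \<in> St M \<longrightarrow> adm (Com M) y \<longrightarrow> dlt M x s y \<in> St M)"

definition is_oca :: "('s, 'b) ca \<Rightarrow> bool" where
  "is_oca M \<longleftrightarrow> wf_ca M \<and> (\<forall>s \<in> St M. br M s = None)"

definition to_rcv :: "'b option \<Rightarrow> 'b rcv" where
  "to_rcv x = (case x of None \<Rightarrow> Bot | Some m \<Rightarrow> Msg m)"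

text \<open>Configuration at time t on input w (cells 1..length w).
  Flag ow = True: one-way CA, the leftmost cell never gets the boundary symbol.\<close>
fun conf :: "bool \<Rightarrow> ('s, 'b) ca \<Rightarrow> 's list \<Rightarrow> nat \<Rightarrow> nat \<Rightarrow> 's" where
  "conf ow M w 0 = (\<lambda>i. w ! (i - 1))"
| "conf ow M w (Suc t) = (\<lambda>i.
     dlt M
       (if i = 1 then (if t = 0 \<and> \<not> ow then Bnd else Bot)
        else to_rcv (br M (conf ow M w t (i - 1))))
       (conf ow M w t i)
       (if i = length w then (if t = 0 then Bnd else Bot)
        else to_rcv (bl M (conf ow M w t (i + 1)))))"

definition accepts_within :: "bool \<Rightarrow> ('s, 'b) ca \<Rightarrow> 's list \<Rightarrow> nat \<Rightarrow> bool" where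
  "accepts_within ow M w T \<longleftrightarrow> w \<noteq> [] \<and> set w \<subseteq> Inp M \<and>
     (\<exists>t \<le> T. conf ow M w t 1 \<in> Acc M)"

definition lang :: "bool \<Rightarrow> ('s, 'b) ca \<Rightarrow> 's list set" where
  "lang ow M = {w. w \<noteq> [] \<and> set w \<subseteq> Inp M \<and> (\<exists>t. conf ow M w t 1 \<in> Acc M)}"

definition com :: "bool \<Rightarrow> ('s, 'b) ca \<Rightarrow> 's list \<Rightarrow> nat \<Rightarrow> nat \<Rightarrow> nat" where
  "com ow M w i t = card {j. j < t \<and>
      (br M (conf ow M w j i) \<noteq> None \<or> bl M (conf ow M w j (i + 1)) \<noteq> None)}"

definition rt_mc_oca_const :: "('s, 'b) ca \<Rightarrow> 's list set \<Rightarrow> bool" where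
  "rt_mc_oca_const M L \<longleftrightarrow> is_oca M \<and> lang True M = L \<and>
     (\<forall>w \<in> L. accepts_within True M w (length w)) \<and>
     (\<exists>g :: nat \<Rightarrow> real. g \<in> O(\<lambda>_. 1) \<and>
        (\<forall>w \<in> L. \<forall>i \<in> {1..<length w}. real (com True M w i (length w)) \<le> g (length w)))"

datatype abc = a | b | c

definition L2 :: "abc list set" where
  "L2 = {replicate (2 ^ n) a @ replicate n b @ replicate (2 ^ n + n) c | n. n \<ge> 1}"

end

theory Submission
  imports Defs "HOL-Library.Countable" "HOL-Library.Discrete_Functions"
begin

(* Information flows from right to left.  On an input
   a^p b^q c^r (N = p+q+r cells) the cells run, in parallel:
   - a format signal moving one cell per step from the right end; it reaches
     cell 1 at time N with the verdict whether the word lies in a+b+c+;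
   - a speed-1/2 signal started by the c-block, reaching cell 1 at 2(p+q);
   - the classical doubling construction inside the a-block: with a speed-1/2
     and a speed-1/3 signal from the b-block, a cell at distance d from the
     b-block gets marked exactly when d is a power of two;
   - a speed-1/2 signal from the b-block delayed by two extra steps at every
     marked cell, reaching cell 1 at 2p + 2 k where k counts the powers of two
     below p.
   Cell 1 accepts when all four signals arrive at the same time and it is
   marked, which forces t = N, r = p+q, p = 2^k and q = k. *)

definition is_pow2 :: "nat \<Rightarrow> bool" where
  "is_pow2 n \<longleftrightarrow> (\<exists>k. n = 2 ^ k)"

lemma is_pow2_power [simp]: "is_pow2 (2 ^ k)"
  unfolding is_pow2_def by blast

lemma is_pow2_one [simp]: "is_pow2 (Suc 0)"
  using is_pow2_power[of 0] by simp

definition hpow2 :: "nat \<Rightarrow> nat" where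
  "hpow2 n = 2 ^ floor_log n"

lemma hpow2_eqI:
  assumes "2 ^ k \<le> n" "n < 2 * 2 ^ k"
  shows "hpow2 n = 2 ^ k"
proof -
  have "0 < n" using assms(1) by (cases n) auto
  then show ?thesis using assms floor_log_eqI by (simp add: hpow2_def)
qed

lemma not_pow2_between:
  assumes "2 ^ k < n" "n < 2 * 2 ^ k"
  shows "\<not> is_pow2 n"
proof
  assume "is_pow2 n"
  then obtain j where j: "n = 2 ^ j" unfolding is_pow2_def by blast
  have "k < j" using assms(1) j by simp
  moreover have "j < Suc k" using assms(2) j by (simp flip: power_Suc)
  ultimately show False by simp
qed

text \<open>This is the
  arithmetic behind the doubling construction.\<close>

lemma hpow2_Suc_cases:
  assumes "1 \<le> d"
  shows "is_pow2 (Suc d) \<and> 2 * hpow2 d = Suc d \<and> hpow2 (Suc d) = Suc d \<or>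
         \<not> is_pow2 (Suc d) \<and> 2 * hpow2 d \<noteq> Suc d \<and> hpow2 (Suc d) = hpow2 d"
proof -
  define k where "k = floor_log d"
  have lo: "2 ^ k \<le> d" using assms floor_log_exp2_le by (simp add: k_def)
  have hi: "d < 2 * 2 ^ k" using floor_log_exp2_gt by (simp add: k_def)
  have hd: "hpow2 d = 2 ^ k" by (simp add: hpow2_def k_def)
  consider "Suc d = 2 * 2 ^ k" | "Suc d < 2 * 2 ^ k" using hi by linarith
  then show ?thesis
  proof cases
    case 1
    then have "hpow2 (Suc d) = Suc d" using hpow2_eqI[of "Suc k"] by simp
    then show ?thesis using 1 hd by (metis is_pow2_power power_Suc)
  next
    case 2
    then show ?thesis using lo hd hpow2_eqI[of k "Suc d"] not_pow2_between[of k "Suc d"] by simp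
  qed
qed

definition npow2_below :: "nat \<Rightarrow> nat" where
  "npow2_below n = card {j. (2::nat) ^ j < n}"

lemma finite_pow2_below: "finite {j. (2::nat) ^ j < n}"
  by (rule finite_subset[of _ "{..<n}"]) (auto intro: less_trans[OF less_exp])

lemma npow2_below_Suc: "npow2_below (Suc n) = npow2_below n + (if is_pow2 n then 1 else 0)"
proof (cases "is_pow2 n")
  case True
  then obtain k where k: "n = 2 ^ k" by (auto simp: is_pow2_def)
  have "{j. (2::nat) ^ j < Suc n} = insert k {j. (2::nat) ^ j < n}"
    using k by (auto simp: less_Suc_eq)
  then show ?thesis using True k finite_pow2_below by (simp add: npow2_below_def)
next
  case False
  have "{j. (2::nat) ^ j < Suc n} = {j. (2::nat) ^ j < n}"
    using False by (auto simp: is_pow2_def less_Suc_eq)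
  then show ?thesis using False by (simp add: npow2_below_def)
qed

lemma npow2_below_power: "npow2_below (2 ^ k) = k"
proof -
  have "{j. (2::nat) ^ j < 2 ^ k} = {..<k}" by auto
  then show ?thesis by (simp add: npow2_below_def)
qed

lemma npow2_below_one [simp]: "npow2_below (Suc 0) = 0"
  using npow2_below_power[of 0] by simp

section \<open>Following a signal through a cell\<close>

text \<open>A cell follows each signal with a phase counter: \<open>Before\<close> the signal has
  arrived, \<open>Arr0\<close> in the step it arrives, \<open>Arr1\<close>, \<open>Arr2\<close>, \<open>Arr3\<close> during the next
  three steps and \<open>Past\<close> afterwards.  A cell passes the signal on to its left
  neighbour in one of the phases \<open>Arr1\<close>--\<open>Arr3\<close>; which one fixes the speed.\<close>

datatype phase = Before | Arr0 | Arr1 | Arr2 | Arr3 | Past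

fun tick :: "phase \<Rightarrow> bool \<Rightarrow> phase" where
  "tick Before r = (if r then Arr0 else Before)"
| "tick Arr0 r = Arr1"
| "tick Arr1 r = Arr2"
| "tick Arr2 r = Arr3"
| "tick Arr3 r = Past"
| "tick Past r = Past"

text \<open>The phase at time \<open>t\<close> of a signal arriving at time \<open>T\<close> (\<open>None\<close>: never).\<close>

definition phase_at :: "nat option \<Rightarrow> nat \<Rightarrow> phase" where
  "phase_at T t = (case T of None \<Rightarrow> Before | Some T0 \<Rightarrow>
     (if t < T0 then Before else if t = T0 then Arr0 else if t = Suc T0 then Arr1
      else if t = Suc (Suc T0) then Arr2 else if t = Suc (Suc (Suc T0)) then Arr3 else Past))"

lemma phase_at_None [simp]: "phase_at None t = Before"
  and phase_at_Arr0 [simp]: "phase_at (Some T) t = Arr0 \<longleftrightarrow> t = T"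
  and phase_at_Arr1 [simp]: "phase_at (Some T) t = Arr1 \<longleftrightarrow> t = Suc T"
  and phase_at_Arr2 [simp]: "phase_at (Some T) t = Arr2 \<longleftrightarrow> t = Suc (Suc T)"
  and phase_at_Arr3 [simp]: "phase_at (Some T) t = Arr3 \<longleftrightarrow> t = Suc (Suc (Suc T))"
  by (auto simp: phase_at_def)

lemma tick_phase_at:
  assumes "t < T \<Longrightarrow> r = (Suc t = T)"
  shows "tick (phase_at (Some T) t) r = phase_at (Some T) (Suc t)"
  using assms by (auto simp: phase_at_def)

section \<open>Arrival times on the word \<open>a^p b^q c^r\<close>\<close>

definition word :: "nat \<Rightarrow> nat \<Rightarrow> nat \<Rightarrow> abc list" where
  "word p q r = replicate p a @ replicate q b @ replicate r c"

lemma length_word [simp]: "length (word p q r) = p + q + r"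
  by (simp add: word_def)

lemma nth_word:
  "1 \<le> x \<Longrightarrow> x \<le> p + q + r \<Longrightarrow>
   word p q r ! (x - 1) = (if x \<le> p then a else if x \<le> p + q then b else c)"
  by (auto simp: word_def nth_append)

lemma L2_word: "u \<in> L2 \<longleftrightarrow> (\<exists>n \<ge> 1. u = word (2 ^ n) n (2 ^ n + n))"
  by (auto simp: L2_def word_def)

text \<open>The intended arrival times of the signals at cell \<open>x\<close>.  The synchronisation
  signal starts in the \<open>c\<close>-block and moves at speed 1/2.  The other three start
  in the \<open>b\<close>-block and travel through the \<open>a\<close>-block, where \<open>p+1-x\<close> is the
  distance of cell \<open>x\<close> from the \<open>b\<close>-block.  Cells of the starting block hold
  the signal at time 0, cells to the right of it never see it.\<close>

definition t_sync :: "nat \<Rightarrow> nat \<Rightarrow> nat \<Rightarrow> nat option" where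
  "t_sync p q x = Some (if x \<le> p + q then 2 * (p + q + 1 - x) else 0)"

definition t_half :: "nat \<Rightarrow> nat \<Rightarrow> nat \<Rightarrow> nat option" where
  "t_half p q x = (if x \<le> p then Some (2 * (p + 1 - x)) else if x \<le> p + q then Some 0 else None)"

definition t_third :: "nat \<Rightarrow> nat \<Rightarrow> nat \<Rightarrow> nat option" where
  "t_third p q x = (if x \<le> p then Some (3 * (p + 1 - x)) else if x \<le> p + q then Some 0 else None)"

definition t_delay :: "nat \<Rightarrow> nat \<Rightarrow> nat \<Rightarrow> nat option" where
  "t_delay p q x = (if x \<le> p then Some (2 * (p + 1 - x) + 2 * npow2_below (p + 1 - x))
     else if x \<le> p + q then Some 0 else None)"

text \<open>A cell at distance \<open>d\<close> is marked iff \<open>d\<close> is a power of two; the mark is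
  set at time 1 for \<open>d = 1\<close> and at time \<open>2d\<close> (the arrival of the speed-1/2
  signal) otherwise.\<close>

definition marked :: "nat \<Rightarrow> nat \<Rightarrow> nat \<Rightarrow> bool" where
  "marked p x t \<longleftrightarrow> x \<le> p \<and> is_pow2 (p + 1 - x) \<and> (if x = p then 1 \<le> t else 2 * (p + 1 - x) \<le> t)"

text \<open>A marked cell at distance \<open>m\<close> fires when the speed-1/3 signal arrives
  (time \<open>3m\<close>); the fire moves left at full speed and meets the speed-1/2 signal
  at distance \<open>2m\<close>, which creates the next mark.\<close>

definition firing :: "nat \<Rightarrow> nat \<Rightarrow> nat \<Rightarrow> bool" where
  "firing p x t \<longleftrightarrow> x \<le> p \<and> t = 2 * hpow2 (p + 1 - x) + (p + 1 - x)"

text \<open>Each of the following lemmas states that the arrival times are consistent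
  with the local rule of the automaton: a cell \<open>x\<close> left of the right end
  updates its component from its own value and the pulse received from
  cell \<open>x+1\<close>.\<close>

lemma sync_step:
  "tick (phase_at (t_sync p q x) t) (phase_at (t_sync p q (Suc x)) t = Arr1) =
   phase_at (t_sync p q x) (Suc t)"
  unfolding t_sync_def by (rule tick_phase_at) (auto split: if_splits)

lemma half_step:
  assumes "1 \<le> q"
  shows "tick (phase_at (t_half p q x) t) (phase_at (t_half p q (Suc x)) t = Arr1) =
         phase_at (t_half p q x) (Suc t)"
  using assms by (cases "x \<le> p + q") (auto simp: t_half_def intro!: tick_phase_at)

lemma third_step:
  assumes "1 \<le> q"
  shows "tick (phase_at (t_third p q x) t) (phase_at (t_third p q (Suc x)) t = Arr2) =
         phase_at (t_third p q x) (Suc t)"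
  using assms by (cases "x \<le> p + q") (auto simp: t_third_def intro!: tick_phase_at)

text \<open>The delayed signal leaves an unmarked cell in phase \<open>Arr1\<close> and a marked
  one in phase \<open>Arr3\<close>, i.e.\ two steps later.\<close>

lemma delay_step:
  assumes "1 \<le> q"
  shows "tick (phase_at (t_delay p q x) t)
           (phase_at (t_delay p q (Suc x)) t = Arr1 \<and> \<not> marked p (Suc x) t \<or>
            phase_at (t_delay p q (Suc x)) t = Arr3 \<and> marked p (Suc x) t)
         = phase_at (t_delay p q x) (Suc t)"
proof -
  consider "x < p" | "x = p" | "p < x" by linarith
  then show ?thesis
  proof cases
    case 1
    define d where "d = p - x"
    have dist: "p + 1 - Suc x = d" "p + 1 - x = Suc d" using 1 d_def by auto
    define D where "D = 2 * d + 2 * npow2_below d"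
    have next_cell: "t_delay p q (Suc x) = Some D"
      using 1 dist by (simp add: t_delay_def D_def)
    have this_cell: "t_delay p q x = Some (D + 2 + (if is_pow2 d then 2 else 0))"
      using 1 dist by (simp add: t_delay_def D_def npow2_below_Suc)
    have "D < t \<Longrightarrow> marked p (Suc x) t = is_pow2 d" for t
      using 1 dist D_def by (auto simp: marked_def)
    then show ?thesis unfolding this_cell next_cell by (intro tick_phase_at) auto
  qed (use assms in \<open>auto simp: t_delay_def marked_def intro!: tick_phase_at\<close>)
qed

lemma mark_step:
  assumes "1 \<le> q"
  shows "(marked p x t \<or> x = p \<and> t = 0 \<or>
          firing p (Suc x) t \<and> phase_at (t_half p q (Suc x)) t = Arr1) = marked p x (Suc t)"
proof -
  consider "x < p" | "x = p" | "p < x" by linarith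
  then show ?thesis
  proof cases
    case 1
    define d where "d = p - x"
    have dist: "p + 1 - Suc x = d" "p + 1 - x = Suc d" "1 \<le> d" using 1 d_def by auto
    have "marked p x t = (is_pow2 (Suc d) \<and> 2 * Suc d \<le> t)"
      and "marked p x (Suc t) = (is_pow2 (Suc d) \<and> 2 * Suc d \<le> Suc t)"
      and "firing p (Suc x) t = (t = 2 * hpow2 d + d)"
      and "(phase_at (t_half p q (Suc x)) t = Arr1) = (t = Suc (2 * d))"
      using 1 dist by (auto simp: marked_def firing_def t_half_def)
    then show ?thesis using 1 hpow2_Suc_cases[OF dist(3)] by auto
  qed (auto simp: marked_def firing_def)
qed

lemma fire_step:
  assumes "1 \<le> q"
  shows "(phase_at (t_third p q (Suc x)) t = Arr2 \<and> marked p x (Suc t) \<or>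
          firing p (Suc x) t \<and> phase_at (t_half p q (Suc x)) t \<noteq> Arr1) = firing p x (Suc t)"
proof -
  consider "x < p" | "x = p" | "p < x" by linarith
  then show ?thesis
  proof cases
    case 1
    define d where "d = p - x"
    have dist: "p + 1 - Suc x = d" "p + 1 - x = Suc d" "1 \<le> d" using 1 d_def by auto
    have "marked p x (Suc t) = (is_pow2 (Suc d) \<and> 2 * Suc d \<le> Suc t)"
      and "firing p (Suc x) t = (t = 2 * hpow2 d + d)"
      and "firing p x (Suc t) = (Suc t = 2 * hpow2 (Suc d) + Suc d)"
      and "(phase_at (t_half p q (Suc x)) t = Arr1) = (t = Suc (2 * d))"
      and "(phase_at (t_third p q (Suc x)) t = Arr2) = (t = Suc (Suc (3 * d)))"
      using 1 dist by (auto simp: marked_def firing_def t_half_def t_third_def)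
    then show ?thesis using hpow2_Suc_cases[OF dist(3)] by auto
  next
    case 2
    have "hpow2 1 = 1" using hpow2_eqI[of 0 1] by simp
    then have "firing p x (Suc t) = (t = 2)" using 2 by (simp add: firing_def)
    moreover have "marked p x (Suc t)" "\<not> firing p (Suc x) t" using 2 by (simp_all add: marked_def firing_def)
    moreover have "(phase_at (t_third p q (Suc x)) t = Arr2) = (t = 2)"
      using 2 assms by (simp add: t_third_def numeral_2_eq_2)
    ultimately show ?thesis by simp
  qed (auto simp: marked_def firing_def)
qed

lemma right_of_blocks:
  assumes "p + q < x"
  shows "t_sync p q x = Some 0" "t_half p q x = None" "t_third p q x = None"
    "t_delay p q x = None" "\<not> marked p x t" "\<not> firing p x t"
  using assms by (auto simp: t_sync_def t_half_def t_third_def t_delay_def marked_def firing_def)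

section \<open>The automaton\<close>

text \<open>The kind of a nonempty suffix of the input: \<open>c+\<close>, \<open>b+c+\<close>, \<open>a+b+c+\<close> or
  anything else; it is computed right to left, one letter at a time.\<close>

datatype kind = Cs | BCs | ABCs | Bad

definition kind_last :: "abc \<Rightarrow> kind" where
  "kind_last x = (if x = c then Cs else Bad)"

definition kind_cons :: "abc \<Rightarrow> kind \<Rightarrow> kind" where
  "kind_cons x k = (case x of
       c \<Rightarrow> (if k = Cs then Cs else Bad)
     | b \<Rightarrow> (if k = Cs \<or> k = BCs then BCs else Bad)
     | a \<Rightarrow> (if k = BCs \<or> k = ABCs then ABCs else Bad))"

fun kind_of :: "abc list \<Rightarrow> kind" where
  "kind_of [] = Bad"
| "kind_of [x] = kind_last x"
| "kind_of (x # y # ys) = kind_cons x (kind_of (y # ys))"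

lemma kind_of_Cons: "zs \<noteq> [] \<Longrightarrow> kind_of (x # zs) = kind_cons x (kind_of zs)"
  by (cases zs) auto

lemma kind_of_word:
  assumes "1 \<le> p" "1 \<le> q" "1 \<le> r"
  shows "kind_of (word p q r) = ABCs"
proof -
  have Cs: "kind_of (c # replicate r c) = Cs" for r
    by (induction r) (simp_all add: kind_last_def kind_cons_def)
  have BCs: "kind_of (b # replicate q b @ c # replicate r c) = BCs" for q r
    by (induction q) (simp_all add: kind_cons_def Cs)
  have ABCs: "kind_of (a # replicate p a @ b # replicate q b @ c # replicate r c) = ABCs" for p q r
    by (induction p) (simp_all add: kind_cons_def BCs)
  obtain p' where "p = Suc p'" using assms(1) by (cases p) auto
  moreover obtain q' where "q = Suc q'" using assms(2) by (cases q) auto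
  moreover obtain r' where "r = Suc r'" using assms(3) by (cases r) auto
  ultimately show ?thesis using ABCs by (simp add: word_def)
qed

lemma kind_cons_eq:
  "kind_cons x k = Cs \<longleftrightarrow> x = c \<and> k = Cs"
  "kind_cons x k = BCs \<longleftrightarrow> x = b \<and> (k = Cs \<or> k = BCs)"
  "kind_cons x k = ABCs \<longleftrightarrow> x = a \<and> (k = BCs \<or> k = ABCs)"
  by (cases x; auto simp: kind_cons_def)+

lemma kind_of_Cs: "kind_of ws = Cs \<Longrightarrow> \<exists>r \<ge> 1. ws = replicate r c"
proof (induction ws rule: kind_of.induct)
  case (3 x y ys)
  then have "x = c" "kind_of (y # ys) = Cs" by (simp_all add: kind_cons_eq)
  then obtain r where "r \<ge> 1" "y # ys = replicate r c" using "3.IH" by blast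
  then show ?case using \<open>x = c\<close> by (intro exI[of _ "Suc r"]) simp
qed (auto simp: kind_last_def split: if_splits intro!: exI[of _ 1])

lemma kind_of_BCs:
  "kind_of ws = BCs \<Longrightarrow> \<exists>q \<ge> 1. \<exists>r \<ge> 1. ws = replicate q b @ replicate r c"
proof (induction ws rule: kind_of.induct)
  case (3 x y ys)
  then have "x = b" and "kind_of (y # ys) = Cs \<or> kind_of (y # ys) = BCs"
    by (simp_all add: kind_cons_eq)
  then show ?case
  proof (elim disjE)
    assume "kind_of (y # ys) = Cs"
    then obtain r where "r \<ge> 1" "y # ys = replicate r c" using kind_of_Cs by blast
    then show ?case using \<open>x = b\<close> by (intro exI[of _ 1] exI[of _ r]) simp
  next
    assume "kind_of (y # ys) = BCs"
    then obtain q r where "q \<ge> 1" "r \<ge> 1" "y # ys = replicate q b @ replicate r c"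
      using "3.IH" by blast
    then show ?case using \<open>x = b\<close> by (intro exI[of _ "Suc q"] exI[of _ r]) simp
  qed
qed (simp_all add: kind_last_def split: if_splits)

lemma kind_of_ABCs:
  "kind_of ws = ABCs \<Longrightarrow> \<exists>p \<ge> 1. \<exists>q \<ge> 1. \<exists>r \<ge> 1. ws = word p q r"
proof (induction ws rule: kind_of.induct)
  case (3 x y ys)
  then have "x = a" and "kind_of (y # ys) = BCs \<or> kind_of (y # ys) = ABCs"
    by (simp_all add: kind_cons_eq)
  then show ?case
  proof (elim disjE)
    assume "kind_of (y # ys) = BCs"
    then obtain q r where qr: "q \<ge> 1" "r \<ge> 1" "y # ys = replicate q b @ replicate r c"
      using kind_of_BCs by blast
    with \<open>x = a\<close> have "x # y # ys = word 1 q r" by (simp add: word_def)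
    with qr show ?case by blast
  next
    assume "kind_of (y # ys) = ABCs"
    then obtain p q r where pqr: "p \<ge> 1" "q \<ge> 1" "r \<ge> 1" "y # ys = word p q r"
      using "3.IH" by blast
    with \<open>x = a\<close> have "x # y # ys = word (Suc p) q r" by (simp add: word_def)
    with pqr show ?case by (metis le_SucI)
  qed
qed (simp_all add: kind_last_def split: if_splits)

text \<open>The format signal: not yet arrived, arriving now with the kind of the
  suffix starting here, or passed.\<close>

datatype fmt_phase = FmtWait | FmtNow kind | FmtDone kind

datatype cell = Cell (letter: abc) (start: bool) (fmt: fmt_phase) (sync: phase) (half: phase)
  (third: phase) (delay: phase) (mark: bool) (fire: bool)

datatype msg = Message (m_letter: "abc option") (m_fmt: "kind option") (m_sync: bool)
  (m_half: bool) (m_third: bool) (m_delay: bool) (m_fire: bool)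

definition silent :: msg where
  "silent = Message None None False False False False False"

text \<open>The speed of a signal is
  determined by the phase in which it is passed on: \<open>Arr1\<close> gives speed 1/2,
  \<open>Arr2\<close> speed 1/3, and the delayed signal leaves marked cells in \<open>Arr3\<close>.\<close>

definition emit :: "cell \<Rightarrow> msg" where
  "emit s = Message (if start s then Some (letter s) else None)
     (case fmt s of FmtNow k \<Rightarrow> Some k | _ \<Rightarrow> None)
     (sync s = Arr1) (half s = Arr1) (third s = Arr2)
     (delay s = Arr1 \<and> \<not> mark s \<or> delay s = Arr3 \<and> mark s) (fire s)"

text \<open>The format signal starts at the rightmost cell (flag \<open>e\<close>: the boundary
  symbol is received) and then moves left, extending the verdict by one letter.\<close>

definition fmt_step :: "bool \<Rightarrow> msg \<Rightarrow> abc \<Rightarrow> fmt_phase \<Rightarrow> fmt_phase" where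
  "fmt_step e m x f = (case f of
       FmtWait \<Rightarrow> (if e then FmtNow (kind_last x)
                  else (case m_fmt m of Some k \<Rightarrow> FmtNow (kind_cons x k) | None \<Rightarrow> FmtWait))
     | FmtNow k \<Rightarrow> FmtDone k
     | FmtDone k \<Rightarrow> FmtDone k)"

text \<open>A cell becomes marked when it is the last \<open>a\<close> (it sees a \<open>b\<close> at time 0)
  or when the fire meets the speed-1/2 signal; it fires when the speed-1/3
  signal reaches it while marked, and the fire moves on unless it has just met
  the speed-1/2 signal.\<close>

definition cell_step :: "bool \<Rightarrow> msg \<Rightarrow> cell \<Rightarrow> cell" where
  "cell_step e m s =
     (let mk = mark s \<or> letter s = a \<and> m_letter m = Some b \<or> m_fire m \<and> m_half m
      in Cell (letter s) False (fmt_step e m (letter s) (fmt s))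
           (tick (sync s) (m_sync m)) (tick (half s) (m_half m)) (tick (third s) (m_third m))
           (tick (delay s) (m_delay m)) mk (m_third m \<and> mk \<or> m_fire m \<and> \<not> m_half m))"

definition init_cell :: "abc \<Rightarrow> cell" where
  "init_cell x = Cell x True FmtWait (if x = c then Arr0 else Before)
     (if x = b then Arr0 else Before) (if x = b then Arr0 else Before)
     (if x = b then Arr0 else Before) False False"

definition accepting :: "cell \<Rightarrow> bool" where
  "accepting s \<longleftrightarrow> fmt s = FmtNow ABCs \<and> sync s = Arr0 \<and> delay s = Arr0 \<and> mark s"

text \<open>The state set of the required CA type is \<open>abc + nat\<close>: input letters are
  \<open>Inl\<close>, cells are coded into \<open>nat\<close>; messages are coded into \<open>nat\<close> and the
  silent message is "nothing sent".  Finiteness of the state set comes from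
  the finiteness of the type of cells.\<close>

instance abc :: countable by countable_datatype
instance phase :: countable by countable_datatype
instance kind :: countable by countable_datatype
instance fmt_phase :: countable by countable_datatype
instance cell :: countable by countable_datatype
instance msg :: countable by countable_datatype

instance abc :: finite
proof
  have "x \<in> {a, b, c}" for x by (cases x) auto
  then show "finite (UNIV :: abc set)" by (metis finite.simps subsetI finite_subset)
qed

instance phase :: finite
proof
  have "x \<in> {Before, Arr0, Arr1, Arr2, Arr3, Past}" for x by (cases x) auto
  then show "finite (UNIV :: phase set)" by (metis finite.simps subsetI finite_subset)
qed

instance kind :: finite
proof
  have "x \<in> {Cs, BCs, ABCs, Bad}" for x by (cases x) auto
  then show "finite (UNIV :: kind set)" by (metis finite.simps subsetI finite_subset)
qed

instance fmt_phase :: finite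
proof
  have "x \<in> insert FmtWait (range FmtNow \<union> range FmtDone)" for x by (cases x) auto
  then show "finite (UNIV :: fmt_phase set)" by (metis finite_subset subsetI finite_Un finite_imageI finite_insert finite)
qed

instance cell :: finite
proof
  let ?mk = "\<lambda>(x1, x2, x3, x4, x5, x6, x7, x8, x9). Cell x1 x2 x3 x4 x5 x6 x7 x8 x9"
  have "s = ?mk (letter s, start s, fmt s, sync s, half s, third s, delay s, mark s, fire s)" for s
    by (cases s) simp
  then have "UNIV = range ?mk" by blast
  then show "finite (UNIV :: cell set)" by (metis finite_imageI finite)
qed

definition decode :: "abc + nat \<Rightarrow> cell" where
  "decode s = (case s of Inl x \<Rightarrow> init_cell x | Inr n \<Rightarrow> from_nat n)"

definition encode :: "msg \<Rightarrow> nat option" where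
  "encode m = (if m = silent then None else Some (to_nat m))"

definition read_msg :: "nat rcv \<Rightarrow> msg" where
  "read_msg r = (case r of Msg n \<Rightarrow> from_nat n | _ \<Rightarrow> silent)"

definition L2_oca :: "(abc + nat, nat) ca" where
  "L2_oca = \<lparr>St = range Inl \<union> range (\<lambda>s::cell. Inr (to_nat s)),
     Acc = (\<lambda>s::cell. Inr (to_nat s)) ` {s. accepting s},
     Inp = range Inl, Com = UNIV, bl = (\<lambda>s. encode (emit (decode s))), br = (\<lambda>s. None),
     dlt = (\<lambda>l s r. Inr (to_nat (cell_step (r = Bnd) (read_msg r) (decode s))))\<rparr>"

lemma Inp_L2_oca [simp]: "Inp L2_oca = range Inl"
  by (simp add: L2_oca_def)

lemma L2_oca_is_oca: "is_oca L2_oca"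
proof -
  have "finite (range (\<lambda>s::cell. (Inr (to_nat s) :: abc + nat)))" by simp
  then show ?thesis by (auto simp: is_oca_def wf_ca_def L2_oca_def)
qed

definition state :: "(abc + nat) list \<Rightarrow> nat \<Rightarrow> nat \<Rightarrow> cell" where
  "state w t x = decode (conf True L2_oca w t x)"

lemma decode_to_nat [simp]: "decode (Inr (to_nat s)) = s"
  by (simp add: decode_def)

lemma read_encode [simp]: "read_msg (to_rcv (encode m)) = m"
  by (simp add: read_msg_def to_rcv_def encode_def)

lemma read_no_msg [simp]: "read_msg Bot = silent" "read_msg Bnd = silent"
  by (simp_all add: read_msg_def)

lemma encode_not_Bnd [simp]: "to_rcv (encode m) \<noteq> Bnd"
  by (simp add: to_rcv_def encode_def)

lemma state_0: "1 \<le> x \<Longrightarrow> x \<le> length ws \<Longrightarrow> state (map Inl ws) 0 x = init_cell (ws ! (x - 1))"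
  by (simp add: state_def decode_def)

lemma state_Suc:
  assumes "1 \<le> x" "x \<le> length w"
  shows "state w (Suc t) x = cell_step (x = length w \<and> t = 0)
           (if x = length w then silent else emit (state w t (Suc x))) (state w t x)"
  using assms by (cases "x = length w") (simp_all add: state_def L2_oca_def)

text \<open>Acceptance by the CA is acceptance by the decoded cell 1; at time 0 the
  cell still holds an input letter, which is not accepting.\<close>

lemma accepted_iff:
  assumes "w = map Inl ws" "ws \<noteq> []"
  shows "conf True L2_oca w t 1 \<in> Acc L2_oca \<longleftrightarrow> t \<noteq> 0 \<and> accepting (state w t 1)"
proof (cases t)
  case 0
  then show ?thesis using assms by (auto simp: L2_oca_def)
next
  case (Suc t')
  have "inj (to_nat :: cell \<Rightarrow> nat)" by simp
  then show ?thesis using Suc by (auto simp: L2_oca_def state_def dest: injD)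
qed

section \<open>Correctness of the simulation\<close>

definition fmt_at :: "abc list \<Rightarrow> nat \<Rightarrow> nat \<Rightarrow> fmt_phase" where
  "fmt_at ws x t =
     (if t < Suc (length ws) - x then FmtWait
      else if t = Suc (length ws) - x then FmtNow (kind_of (drop (x - 1) ws))
      else FmtDone (kind_of (drop (x - 1) ws)))"

lemma drop_pred_nth: "1 \<le> x \<Longrightarrow> x \<le> length ws \<Longrightarrow> drop (x - 1) ws = ws ! (x - 1) # drop x ws"
  using Cons_nth_drop_Suc[of "x - 1" ws] by simp

lemma state_letter_fmt:
  assumes w: "w = map Inl ws" and "1 \<le> x" "x \<le> length ws"
  shows "letter (state w t x) = ws ! (x - 1) \<and> start (state w t x) = (t = 0) \<and>
         fmt (state w t x) = fmt_at ws x t"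
  using assms(2,3)
proof (induction t arbitrary: x)
  case 0
  then show ?case using w by (simp add: state_0 init_cell_def fmt_at_def)
next
  case (Suc t)
  have IH: "letter (state w t x) = ws ! (x - 1)" "start (state w t x) = (t = 0)"
    "fmt (state w t x) = fmt_at ws x t"
    using Suc by auto
  have suffix: "drop (x - 1) ws = ws ! (x - 1) # drop x ws"
    using Suc.prems by (rule drop_pred_nth)
  show ?case
  proof (cases "x = length ws")
    case True
    then show ?thesis using Suc.prems IH suffix w
      by (simp add: state_Suc cell_step_def Let_def fmt_step_def fmt_at_def silent_def
          split: fmt_phase.splits)
  next
    case False
    then have "x < length ws" using Suc.prems by simp
    then have "fmt (state w t (Suc x)) = fmt_at ws (Suc x) t"
      using Suc.IH[of "Suc x"] by simp
    then show ?thesis using Suc.prems \<open>x < length ws\<close> IH suffix w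
      by (auto simp: state_Suc cell_step_def Let_def fmt_step_def fmt_at_def emit_def kind_of_Cons
          split: fmt_phase.splits)
  qed
qed

definition on_schedule :: "nat \<Rightarrow> nat \<Rightarrow> nat \<Rightarrow> nat \<Rightarrow> cell \<Rightarrow> bool" where
  "on_schedule p q x t s \<longleftrightarrow>
     sync s = phase_at (t_sync p q x) t \<and> half s = phase_at (t_half p q x) t \<and>
     third s = phase_at (t_third p q x) t \<and> delay s = phase_at (t_delay p q x) t \<and>
     (mark s \<longleftrightarrow> marked p x t) \<and> (fire s \<longleftrightarrow> firing p x t)"

lemma on_schedule_init:
  assumes "1 \<le> x" "x \<le> p + q + r"
  shows "on_schedule p q x 0 (init_cell (word p q r ! (x - 1)))"
  using assms nth_word[OF assms]
  by (auto simp: init_cell_def on_schedule_def phase_at_def t_sync_def t_half_def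
      t_third_def t_delay_def marked_def firing_def)

lemma on_schedule_step:
  assumes "1 \<le> q" and s: "on_schedule p q x t s" and s': "on_schedule p q (Suc x) t s'"
    and boundary: "(letter s = a \<and> m_letter (emit s') = Some b) \<longleftrightarrow> x = p \<and> t = 0"
  shows "on_schedule p q x (Suc t) (cell_step False (emit s') s)"
proof -
  have mark': "(mark s \<or> letter s = a \<and> m_letter (emit s') = Some b \<or> fire s' \<and> half s' = Arr1)
      = marked p x (Suc t)"
    using s s' boundary mark_step[OF assms(1)] by (simp add: on_schedule_def)
  show ?thesis
    using s s' mark' sync_step half_step[OF assms(1)] third_step[OF assms(1)]
      delay_step[OF assms(1)] fire_step[OF assms(1)]
    by (simp add: on_schedule_def cell_step_def Let_def emit_def del: tick.simps)
qed

lemma on_schedule_last: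
  assumes "p + q < x" "on_schedule p q x t s"
  shows "on_schedule p q x (Suc t) (cell_step e silent s)"
  using assms right_of_blocks[OF assms(1)] tick_phase_at[of t 0 False]
  by (simp add: on_schedule_def cell_step_def Let_def silent_def)

lemma state_on_schedule:
  assumes w: "w = map Inl (word p q r)" and "1 \<le> q" "1 \<le> r" "1 \<le> x" "x \<le> p + q + r"
  shows "on_schedule p q x t (state w t x)"
  using assms(4,5)
proof (induction t arbitrary: x)
  case 0
  then show ?case using w on_schedule_init by (simp add: state_0)
next
  case (Suc t)
  show ?case
  proof (cases "x = p + q + r")
    case True
    then show ?thesis using Suc assms(3) w on_schedule_last[of p q x t] by (simp add: state_Suc)
  next
    case False
    then have x: "x < p + q + r" using Suc.prems by simp
    have letters: "letter (state w t x) = word p q r ! (x - 1)"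
      "letter (state w t (Suc x)) = word p q r ! x" "start (state w t (Suc x)) = (t = 0)"
      using state_letter_fmt[OF w, of x t] state_letter_fmt[OF w, of "Suc x" t] Suc.prems x by auto
    have "(letter (state w t x) = a \<and> m_letter (emit (state w t (Suc x))) = Some b) \<longleftrightarrow>
          x = p \<and> t = 0"
      using letters nth_word[of x p q r] nth_word[of "Suc x" p q r] Suc.prems x assms(2)
      by (auto simp: emit_def split: if_splits)
    then show ?thesis
      using on_schedule_step[OF assms(2) Suc.IH Suc.IH[of "Suc x"]] Suc.prems x w
      by (simp add: state_Suc)
  qed
qed

text \<open>Soundness: if cell 1 accepts, the format verdict forces \<open>t = N\<close> and
  \<open>w = a^p b^q c^r\<close>; the synchronisation signal forces \<open>N = 2(p+q)\<close>, the
  delayed signal \<open>N = 2p + 2 npow2_below p\<close> and the mark \<open>p = 2^k\<close>.\<close>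

lemma accepting_sound:
  assumes w: "w = map Inl ws" and "ws \<noteq> []" and acc: "accepting (state w t 1)"
  shows "ws \<in> L2 \<and> t = length ws"
proof -
  have "fmt_at ws 1 t = FmtNow ABCs"
    using acc state_letter_fmt[OF w, of 1 t] assms(2) by (simp add: accepting_def Suc_le_eq)
  then have t: "t = length ws" and "kind_of ws = ABCs"
    by (auto simp: fmt_at_def split: if_splits)
  then obtain p q r where pqr: "1 \<le> p" "1 \<le> q" "1 \<le> r" "ws = word p q r"
    using kind_of_ABCs by blast
  then have "on_schedule p q 1 t (state w t 1)"
    using w state_on_schedule by simp
  then have sync: "t = 2 * (p + q)" and delay: "t = 2 * p + 2 * npow2_below p"
    and "is_pow2 p"
    using acc pqr(1) by (auto simp: on_schedule_def accepting_def t_sync_def t_delay_def marked_def)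
  then obtain k where p: "p = 2 ^ k" by (auto simp: is_pow2_def)
  then have "q = k" using sync delay npow2_below_power by simp
  moreover have "r = p + q" using sync t pqr(4) by simp
  ultimately show ?thesis using pqr(2,4) p t L2_word by blast
qed

lemma accepting_complete:
  assumes "1 \<le> n" and w: "w = map Inl (word (2 ^ n) n (2 ^ n + n))"
  shows "accepting (state w (2 * (2 ^ n + n)) 1)"
proof -
  have "(2::nat) ^ 1 \<le> 2 ^ n" using assms(1) by (intro power_increasing) auto
  then have p: "2 \<le> (2::nat) ^ n" by simp
  have "fmt (state w (2 * (2 ^ n + n)) 1) = FmtNow ABCs"
    using state_letter_fmt[OF w, of 1] kind_of_word[of "2 ^ n" n] assms(1) p
    by (simp add: fmt_at_def)
  moreover have "on_schedule (2 ^ n) n 1 (2 * (2 ^ n + n)) (state w (2 * (2 ^ n + n)) 1)"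
    using state_on_schedule[OF w] assms(1) p by simp
  ultimately show ?thesis using p
    by (simp add: accepting_def on_schedule_def t_sync_def t_delay_def marked_def npow2_below_power)
qed

lemma L2_oca_accepts_L2:
  assumes "u \<in> L2"
  shows "u \<noteq> [] \<and> conf True L2_oca (map Inl u) (length u) 1 \<in> Acc L2_oca"
proof -
  obtain n where n: "1 \<le> n" "u = word (2 ^ n) n (2 ^ n + n)" using assms L2_word by blast
  then have "u \<noteq> []" and len: "length u = 2 * (2 ^ n + n)" by (auto simp: word_def)
  moreover have "accepting (state (map Inl u) (length u) 1)"
    unfolding len unfolding n(2) by (rule accepting_complete[OF n(1) refl])
  ultimately show ?thesis using accepted_iff[of "map Inl u" u] by simp
qed

lemma lang_L2_oca: "lang True L2_oca = map Inl ` L2"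
proof
  show "lang True L2_oca \<subseteq> map Inl ` L2"
  proof
    fix w assume "w \<in> lang True L2_oca"
    then obtain t where w: "w \<noteq> []" "set w \<subseteq> range Inl" "conf True L2_oca w t 1 \<in> Acc L2_oca"
      by (auto simp: lang_def)
    define ws where "ws = map projl w"
    have ws: "w = map Inl ws"
      using w(2) unfolding ws_def by (induction w) auto
    then have "accepting (state w t 1)" using w accepted_iff[OF ws] by simp
    then show "w \<in> map Inl ` L2" using accepting_sound[OF ws] ws w(1) by blast
  qed
  show "map Inl ` L2 \<subseteq> lang True L2_oca"
    using L2_oca_accepts_L2 by (auto simp: lang_def)
qed

text \<open>Each cell sends a message at most eight times: at time 0, when the format
  signal passes, when it passes on each of the four signals (the delayed one
  in one of two phases) and when the fire is there.\<close>

lemma emit_not_silent: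
  "emit s \<noteq> silent \<Longrightarrow> start s \<or> (\<exists>k. fmt s = FmtNow k) \<or> sync s = Arr1 \<or> half s = Arr1 \<or>
     third s = Arr2 \<or> delay s = Arr1 \<or> delay s = Arr3 \<or> fire s"
  by (cases "fmt s") (auto simp: emit_def silent_def)

lemma phase_at_passing:
  "phase_at T j = Arr1 \<Longrightarrow> j = Suc (the T)"
  "phase_at T j = Arr2 \<Longrightarrow> j = Suc (Suc (the T))"
  "phase_at T j = Arr3 \<Longrightarrow> j = Suc (Suc (Suc (the T)))"
  by (cases T; simp)+

lemma sending_times:
  assumes w: "w = map Inl (word p q r)" and "1 \<le> q" "1 \<le> r" "1 \<le> y" "y \<le> p + q + r"
    and "emit (state w j y) \<noteq> silent"
  shows "j \<in> set [0, Suc (p + q + r) - y, Suc (the (t_sync p q y)), Suc (the (t_half p q y)),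
    Suc (Suc (the (t_third p q y))), 2 * hpow2 (p + 1 - y) + (p + 1 - y),
    Suc (the (t_delay p q y)), Suc (Suc (Suc (the (t_delay p q y))))]"
  using emit_not_silent[OF assms(6)] state_letter_fmt[OF w, of y j]
    state_on_schedule[OF assms(1-5), of j] assms(4,5)
  by (auto simp: on_schedule_def fmt_at_def firing_def dest: phase_at_passing split: if_splits)

lemma L2_oca_com_bound:
  assumes w: "w = map Inl (word p q r)" and "1 \<le> q" "1 \<le> r" and i: "1 \<le> i" "i < length w"
  shows "com True L2_oca w i T \<le> 8"
proof -
  let ?times = "[0, Suc (p + q + r) - Suc i, Suc (the (t_sync p q (Suc i))),
    Suc (the (t_half p q (Suc i))), Suc (Suc (the (t_third p q (Suc i)))),
    2 * hpow2 (p + 1 - Suc i) + (p + 1 - Suc i), Suc (the (t_delay p q (Suc i))),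
    Suc (Suc (Suc (the (t_delay p q (Suc i)))))]"
  have "{j. j < T \<and> (br L2_oca (conf True L2_oca w j i) \<noteq> None \<or>
                      bl L2_oca (conf True L2_oca w j (i + 1)) \<noteq> None)}
        \<subseteq> set ?times"
    using sending_times[OF assms(1-3), of "Suc i"] i w
    by (auto simp: L2_oca_def state_def encode_def split: if_splits)
  then have "com True L2_oca w i T \<le> card (set ?times)"
    unfolding com_def by (rule card_mono[rotated]) simp
  also have "\<dots> \<le> 8" using card_length[of ?times] by simp
  finally show ?thesis .
qed

theorem mainTheorem2:
  shows "\<exists>M :: (abc + nat, nat) ca. rt_mc_oca_const M (map Inl ` L2) \<and> Inp M = range Inl"
proof (intro exI[of _ L2_oca] conjI)
  show "Inp L2_oca = range Inl" by simp
  show "rt_mc_oca_const L2_oca (map Inl ` L2)"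
    unfolding rt_mc_oca_const_def
  proof (intro conjI L2_oca_is_oca lang_L2_oca ballI exI[of _ "\<lambda>_. 8"])
    fix w :: "(abc + nat) list" assume "w \<in> map Inl ` L2"
    then obtain u where u: "u \<in> L2" "w = map Inl u" by blast
    then have "w \<noteq> []" "conf True L2_oca w (length w) 1 \<in> Acc L2_oca"
      using L2_oca_accepts_L2[OF u(1)] by simp_all
    moreover have "set w \<subseteq> Inp L2_oca" using u(2) by auto
    ultimately show "accepts_within True L2_oca w (length w)"
      unfolding accepts_within_def by blast
  next
    show "(\<lambda>_. 8::real) \<in> O(\<lambda>_. 1)" by (rule bigo_const)
  next
    fix w :: "(abc + nat) list" and i assume "w \<in> map Inl ` L2" and i: "i \<in> {1..<length w}"
    then obtain u where u: "u \<in> L2" "w = map Inl u" by blast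
    then obtain n where n: "1 \<le> n" "u = word (2 ^ n) n (2 ^ n + n)"
      using L2_word by blast
    have "com True L2_oca w i (length w) \<le> 8"
      using L2_oca_com_bound[of w "2 ^ n" n "2 ^ n + n" i] u(2) n i by simp
    then show "real (com True L2_oca w i (length w)) \<le> 8" by simp
  qed
qed

end
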